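(* Let $A$ be a Noetherian integral domain. Every sublocalization over $A$ is a localization of $A$ if and only if each associated prime of a principal ideal of $A$ is the radical of a principal ideal. In particular, if $A$ has these equivalent properties, then nonzero principal ideals of $A$ have no embedded associated primes.
   Context: For an integral domain $A$ with field of fractions $K$, an overring is a subring of $K$ containing $A$. An overring $B$ is a localization of $A$ if $B=S^{-1}A$ for a multiplicatively closed set $S$ of nonzero elements of $A$; $B$ is a sublocalization over $A$ if $B$ is an intersection of localizations of $A$ (an empty intersection being $K$). A prime $P$ of $A$ is an associated prime of an ideal $I$ if there is $a\in A$ such that $P$ is a minimal prime over $(I:_A a)=\{r\in A: ra\in I\}$. *)

theory Defs
  imports "HOL-Computational_Algebra.Fraction_Field"
begin

text \<open>Ideal-theoretic notions for a commutative ring given as a type (the ring is all of 'a).\<close>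

definition is_ideal :: "'a::comm_ring_1 set \<Rightarrow> bool" where
  "is_ideal I \<longleftrightarrow> 0 \<in> I \<and> (\<forall>x\<in>I. \<forall>y\<in>I. x + y \<in> I) \<and> (\<forall>x\<in>I. \<forall>r. r * x \<in> I)"

definition is_prime_ideal :: "'a::comm_ring_1 set \<Rightarrow> bool" where
  "is_prime_ideal P \<longleftrightarrow> is_ideal P \<and> 1 \<notin> P \<and> (\<forall>x y. x * y \<in> P \<longrightarrow> x \<in> P \<or> y \<in> P)"

definition noetherian_ring :: "'a::comm_ring_1 itself \<Rightarrow> bool" where
  "noetherian_ring _ \<longleftrightarrow>
     (\<forall>f :: nat \<Rightarrow> 'a set. (\<forall>n. is_ideal (f n)) \<and> (\<forall>n. f n \<subseteq> f (Suc n))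
        \<longrightarrow> (\<exists>N. \<forall>n\<ge>N. f n = f N))"

definition principal_ideal :: "'a::comm_ring_1 \<Rightarrow> 'a set" where
  "principal_ideal x = {x * r | r. True}"

definition radical :: "'a::comm_ring_1 set \<Rightarrow> 'a set" where
  "radical I = {r. \<exists>n::nat. r ^ n \<in> I}"

definition colon :: "'a::comm_ring_1 set \<Rightarrow> 'a \<Rightarrow> 'a set" where
  "colon I a = {r. r * a \<in> I}"

definition minimal_prime_over :: "'a::comm_ring_1 set \<Rightarrow> 'a set \<Rightarrow> bool" where
  "minimal_prime_over P I \<longleftrightarrow> is_prime_ideal P \<and> I \<subseteq> P \<and>
     \<not> (\<exists>Q. is_prime_ideal Q \<and> I \<subseteq> Q \<and> Q \<subset> P)"

definition associated_prime :: "'a::comm_ring_1 set \<Rightarrow> 'a set \<Rightarrow> bool" where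
  "associated_prime P I \<longleftrightarrow> (\<exists>a. minimal_prime_over P (colon I a))"

definition embedded_associated_prime :: "'a::comm_ring_1 set \<Rightarrow> 'a set \<Rightarrow> bool" where
  "embedded_associated_prime P I \<longleftrightarrow> associated_prime P I \<and>
     (\<exists>Q. associated_prime Q I \<and> Q \<subset> P)"

definition mult_closed_nonzero :: "'a::idom set \<Rightarrow> bool" where
  "mult_closed_nonzero S \<longleftrightarrow> 1 \<in> S \<and> 0 \<notin> S \<and> (\<forall>s\<in>S. \<forall>t\<in>S. s * t \<in> S)"

definition localization_set :: "'a::idom set \<Rightarrow> 'a fract set" where
  "localization_set S = {Fract a s | a s. s \<in> S}"

definition is_localization :: "'a::idom fract set \<Rightarrow> bool" where
  "is_localization B \<longleftrightarrow> (\<exists>S. mult_closed_nonzero S \<and> B = localization_set S)"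

definition is_sublocalization :: "'a::idom fract set \<Rightarrow> bool" where
  "is_sublocalization B \<longleftrightarrow> (\<exists>F. (\<forall>L\<in>F. is_localization L) \<and> B = \<Inter> F)"

end

theory Submission
  imports Defs
begin

text \<open>
  If every associated prime of a principal ideal is the radical of a principal ideal, take an
  element \<open>a/s\<close> of a sublocalization \<open>B\<close>. The radical of \<open>(s : a)\<close> is the intersection of its
  finitely many minimal primes, which are associated primes of \<open>sA\<close>, hence it equals the radical
  of a principal ideal \<open>yA\<close>. Every localization containing \<open>a/s\<close> then contains \<open>1/y\<close>, and
  \<open>a/s = c/y\<^sup>m\<close>; so \<open>B\<close> is the localization at the elements invertible in \<open>B\<close>.

  Conversely, an associated prime \<open>P\<close> of \<open>xA\<close> is the radical of some \<open>(x : a)\<close>. The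
  intersection of the \<open>A\<^sub>Q\<close> over the primes \<open>Q\<close> not containing \<open>P\<close> contains \<open>a/x\<close>; if it is a
  localization \<open>S\<^sup>-\<^sup>1A\<close>, some \<open>s \<in> S\<close> lies in \<open>(x : a) \<subseteq> P\<close>, and \<open>1/s \<in> A\<^sub>Q\<close> forces every
  minimal prime of \<open>sA\<close> to contain \<open>P\<close>, whence \<open>P = rad(sA)\<close>.

  Finally, if \<open>P = rad(yA)\<close> then by Krull's principal ideal theorem the only prime strictly
  inside \<open>P\<close> is \<open>0\<close>, which cannot be an associated prime of \<open>xA\<close> for \<open>x \<noteq> 0\<close>.
\<close>

lemma ideal_zero: "is_ideal I \<Longrightarrow> 0 \<in> I"
  by (simp add: is_ideal_def)

lemma ideal_add: "is_ideal I \<Longrightarrow> x \<in> I \<Longrightarrow> y \<in> I \<Longrightarrow> x + y \<in> I"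
  by (simp add: is_ideal_def)

lemma ideal_mult_left: "is_ideal I \<Longrightarrow> x \<in> I \<Longrightarrow> r * x \<in> I"
  by (simp add: is_ideal_def)

lemma ideal_mult_right: "is_ideal I \<Longrightarrow> x \<in> I \<Longrightarrow> x * r \<in> I"
  by (metis ideal_mult_left mult.commute)

lemma ideal_diff: "is_ideal I \<Longrightarrow> x \<in> I \<Longrightarrow> y \<in> I \<Longrightarrow> x - y \<in> I"
  by (metis ideal_add ideal_mult_left mult_minus1 diff_conv_add_uminus)

lemma ideal_eq_UNIV_if_one: "is_ideal I \<Longrightarrow> 1 \<in> I \<Longrightarrow> I = UNIV"
  by (metis UNIV_eq_I ideal_mult_left mult.right_neutral)

lemma is_ideal_Int: "is_ideal I \<Longrightarrow> is_ideal K \<Longrightarrow> is_ideal (I \<inter> K)"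
  unfolding is_ideal_def by blast

lemma prime_ideal_is_ideal: "is_prime_ideal P \<Longrightarrow> is_ideal P"
  by (simp add: is_prime_ideal_def)

lemma prime_ideal_one_notin: "is_prime_ideal P \<Longrightarrow> 1 \<notin> P"
  by (simp add: is_prime_ideal_def)

lemma prime_ideal_mult: "is_prime_ideal P \<Longrightarrow> x * y \<in> P \<Longrightarrow> x \<in> P \<or> y \<in> P"
  by (simp add: is_prime_ideal_def)

lemma prime_ideal_mult_notin: "is_prime_ideal P \<Longrightarrow> x \<notin> P \<Longrightarrow> y \<notin> P \<Longrightarrow> x * y \<notin> P"
  using prime_ideal_mult by blast

lemma prime_ideal_power: "is_prime_ideal P \<Longrightarrow> r ^ n \<in> P \<Longrightarrow> r \<in> P"
  by (induction n) (use prime_ideal_one_notin prime_ideal_mult in auto)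

lemma in_principal_ideal_iff: "y \<in> principal_ideal x \<longleftrightarrow> x dvd y"
  by (auto simp: principal_ideal_def dvd_def)

lemma is_ideal_principal_ideal: "is_ideal (principal_ideal x)"
  by (auto simp: is_ideal_def in_principal_ideal_iff)

lemma principal_ideal_self: "x \<in> principal_ideal x"
  by (simp add: in_principal_ideal_iff)

lemma principal_ideal_subset: "is_ideal I \<Longrightarrow> x \<in> I \<Longrightarrow> principal_ideal x \<subseteq> I"
  by (auto simp: principal_ideal_def intro: ideal_mult_right)

lemma in_colon_iff: "r \<in> colon I a \<longleftrightarrow> r * a \<in> I"
  by (simp add: colon_def)

lemma is_ideal_colon: "is_ideal I \<Longrightarrow> is_ideal (colon I a)"
  unfolding is_ideal_def colon_def by (auto simp: distrib_right mult.assoc)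

lemma colon_colon: "colon (colon I a) b = colon I (a * b)"
  by (auto simp: colon_def mult_ac)

lemma in_colon_principal_iff: "r \<in> colon (principal_ideal s) a \<longleftrightarrow> s dvd r * a"
  by (simp add: in_colon_iff in_principal_ideal_iff)

lemma in_radical_iff: "r \<in> radical I \<longleftrightarrow> (\<exists>n. r ^ n \<in> I)"
  by (simp add: radical_def)

lemma subset_radical: "I \<subseteq> radical I"
  by (auto simp: radical_def intro: exI[of _ 1])

lemma radical_mono: "I \<subseteq> K \<Longrightarrow> radical I \<subseteq> radical K"
  by (auto simp: radical_def)

lemma radical_subset_prime: "is_prime_ideal P \<Longrightarrow> I \<subseteq> P \<Longrightarrow> radical I \<subseteq> P"
  by (auto simp: radical_def intro: prime_ideal_power)

lemma radical_prime_ideal: "is_prime_ideal P \<Longrightarrow> radical P = P"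
  using radical_subset_prime[OF _ order_refl] subset_radical by blast

lemma radical_principal_zero: "radical (principal_ideal 0) = {0::'a::idom}"
  by (auto simp: in_radical_iff in_principal_ideal_iff intro: exI[of _ 1])

lemma radical_principal_prod:
  assumes "finite A"
  shows "radical (principal_ideal (\<Prod>i\<in>A. f i)) = (\<Inter>i\<in>A. radical (principal_ideal (f i)))"
proof
  show "radical (principal_ideal (\<Prod>i\<in>A. f i)) \<subseteq> (\<Inter>i\<in>A. radical (principal_ideal (f i)))"
  proof
    fix r assume "r \<in> radical (principal_ideal (\<Prod>i\<in>A. f i))"
    then obtain n where "(\<Prod>i\<in>A. f i) dvd r ^ n"
      unfolding in_radical_iff in_principal_ideal_iff by blast
    then have "f i dvd r ^ n" if "i \<in> A" for i
      by (rule dvd_trans[OF dvd_prodI[OF assms that]])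
    then show "r \<in> (\<Inter>i\<in>A. radical (principal_ideal (f i)))"
      by (auto simp: in_radical_iff in_principal_ideal_iff)
  qed
next
  show "(\<Inter>i\<in>A. radical (principal_ideal (f i))) \<subseteq> radical (principal_ideal (\<Prod>i\<in>A. f i))"
  proof
    fix r assume "r \<in> (\<Inter>i\<in>A. radical (principal_ideal (f i)))"
    then have "\<forall>i\<in>A. \<exists>n. f i dvd r ^ n"
      by (simp add: in_radical_iff in_principal_ideal_iff)
    then obtain e where e: "\<And>i. i \<in> A \<Longrightarrow> f i dvd r ^ e i"
      by metis
    have "(\<Prod>i\<in>A. f i) dvd (\<Prod>i\<in>A. r ^ e i)"
      by (rule prod_dvd_prod) (rule e)
    then show "r \<in> radical (principal_ideal (\<Prod>i\<in>A. f i))"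
      unfolding in_radical_iff in_principal_ideal_iff
      by (intro exI[of _ "\<Sum>i\<in>A. e i"]) (simp add: power_sum)
  qed
qed

lemma prime_ideal_contains_member_if_contains_Inter:
  assumes "finite F" "\<And>I. I \<in> F \<Longrightarrow> is_ideal I" "is_prime_ideal Q" "\<Inter>F \<subseteq> Q"
  shows "\<exists>I\<in>F. I \<subseteq> Q"
  using assms
proof (induction F rule: finite_induct)
  case empty
  then show ?case using prime_ideal_one_notin by auto
next
  case (insert I F)
  show ?case
  proof (cases "I \<subseteq> Q")
    case False
    then obtain x where x: "x \<in> I" "x \<notin> Q" by auto
    have "\<Inter>F \<subseteq> Q"
    proof
      fix z assume z: "z \<in> \<Inter>F"
      have "x * z \<in> I" using insert.prems(1) x(1) ideal_mult_right by blast
      moreover have "x * z \<in> \<Inter>F" using z insert.prems(1) ideal_mult_left by blast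
      ultimately have "x * z \<in> Q" using insert.prems(3) by auto
      then show "z \<in> Q" using x(2) prime_ideal_mult insert.prems(2) by blast
    qed
    then show ?thesis using insert by auto
  qed simp
qed

definition ideal_sum :: "'a::comm_ring_1 set \<Rightarrow> 'a set \<Rightarrow> 'a set" where
  "ideal_sum A B = {a + b | a b. a \<in> A \<and> b \<in> B}"

lemma in_ideal_sum_iff: "w \<in> ideal_sum A B \<longleftrightarrow> (\<exists>a\<in>A. \<exists>b\<in>B. w = a + b)"
  unfolding ideal_sum_def by blast

lemma in_ideal_sum_principal_iff:
  "w \<in> ideal_sum J (principal_ideal x) \<longleftrightarrow> (\<exists>j\<in>J. \<exists>r. w = j + x * r)"
  unfolding in_ideal_sum_iff principal_ideal_def by blast

lemma is_ideal_ideal_sum: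
  assumes A: "is_ideal A" and B: "is_ideal B"
  shows "is_ideal (ideal_sum A B)"
  unfolding is_ideal_def
proof (intro conjI ballI allI)
  show "0 \<in> ideal_sum A B"
    unfolding in_ideal_sum_iff using ideal_zero[OF A] ideal_zero[OF B] by force
next
  fix u v assume "u \<in> ideal_sum A B" "v \<in> ideal_sum A B"
  then obtain a b a' b' where "a \<in> A" "b \<in> B" "a' \<in> A" "b' \<in> B" "u = a + b" "v = a' + b'"
    unfolding in_ideal_sum_iff by blast
  moreover have "u + v = (a + a') + (b + b')" if "u = a + b" "v = a' + b'"
    using that by (simp add: algebra_simps)
  ultimately show "u + v \<in> ideal_sum A B"
    unfolding in_ideal_sum_iff by (meson ideal_add A B)
next
  fix u c assume "u \<in> ideal_sum A B"
  then obtain a b where "a \<in> A" "b \<in> B" "u = a + b"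
    unfolding in_ideal_sum_iff by blast
  then show "c * u \<in> ideal_sum A B"
    unfolding in_ideal_sum_iff
    by (intro bexI[of _ "c * a"] bexI[of _ "c * b"] ideal_mult_left A B)
      (simp_all add: distrib_left)
qed

lemma ideal_sum_subset_left: "is_ideal B \<Longrightarrow> A \<subseteq> ideal_sum A B"
  unfolding in_ideal_sum_iff subset_iff by (metis add.right_neutral ideal_zero)

lemma ideal_sum_subset_right: "is_ideal A \<Longrightarrow> B \<subseteq> ideal_sum A B"
  unfolding in_ideal_sum_iff subset_iff by (metis add.left_neutral ideal_zero)

lemma ideal_sum_mono: "A \<subseteq> A' \<Longrightarrow> B \<subseteq> B' \<Longrightarrow> ideal_sum A B \<subseteq> ideal_sum A' B'"
  unfolding ideal_sum_def by blast

lemma ideal_sum_least: "is_ideal K \<Longrightarrow> A \<subseteq> K \<Longrightarrow> B \<subseteq> K \<Longrightarrow> ideal_sum A B \<subseteq> K"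
  unfolding ideal_sum_def by (auto intro: ideal_add)

lemma mem_ideal_sum_principal: "is_ideal J \<Longrightarrow> x \<in> ideal_sum J (principal_ideal x)"
  using ideal_sum_subset_right[of J "principal_ideal x"] principal_ideal_self by blast

subsection \<open>Noetherian rings\<close>

lemma noetherian_ring_ascending_chain_bounded:
  assumes "noetherian_ring TYPE('a::comm_ring_1)"
    and "\<And>n. is_ideal (f n :: 'a set)" and mono: "\<And>n. f n \<subseteq> f (Suc n)"
  shows "\<exists>N. \<forall>n. f n \<subseteq> f N"
proof -
  have "(\<forall>n. is_ideal (f n)) \<and> (\<forall>n. f n \<subseteq> f (Suc n)) \<longrightarrow> (\<exists>N. \<forall>n\<ge>N. f n = f N)"
    using assms(1) unfolding noetherian_ring_def by (rule spec)
  then obtain N where N: "\<forall>n\<ge>N. f n = f N"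
    using assms(2) mono by blast
  have "f n \<subseteq> f N" for n
  proof (cases "n \<le> N")
    case True
    then show ?thesis by (rule lift_Suc_mono_le[of f, OF mono])
  next
    case False
    then show ?thesis using N[rule_format, of n] by simp
  qed
  then show ?thesis by blast
qed

lemma noetherian_ring_has_maximal:
  assumes N: "noetherian_ring TYPE('a::comm_ring_1)"
    and "(C :: 'a set set) \<noteq> {}" and C: "\<And>I. I \<in> C \<Longrightarrow> is_ideal I"
  shows "\<exists>M\<in>C. \<forall>I\<in>C. M \<subseteq> I \<longrightarrow> I = M"
proof (rule ccontr)
  assume "\<not> ?thesis"
  then have "\<forall>M\<in>C. \<exists>I\<in>C. M \<subset> I" by auto
  then obtain g where g: "\<And>M. M \<in> C \<Longrightarrow> g M \<in> C \<and> M \<subset> g M" by metis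
  obtain M0 where "M0 \<in> C" using assms(2) by auto
  define f where "f n = (g ^^ n) M0" for n
  have fC: "f n \<in> C" for n
  proof (induction n)
    case 0
    then show ?case using \<open>M0 \<in> C\<close> by (simp add: f_def)
  next
    case (Suc n)
    then show ?case using g[of "f n"] by (simp add: f_def)
  qed
  have f_strict: "f n \<subset> f (Suc n)" for n
    using g[OF fC[of n]] by (simp add: f_def)
  have "\<exists>N. \<forall>n. f n \<subseteq> f N"
    by (rule noetherian_ring_ascending_chain_bounded[OF N C[OF fC]]) (use f_strict in blast)
  then obtain N where "f (Suc N) \<subseteq> f N" by blast
  with f_strict[of N] show False by blast
qed

lemma noetherian_ring_ideal_induct:
  assumes "noetherian_ring TYPE('a::comm_ring_1)" and "is_ideal (I :: 'a set)"
    and step: "\<And>I. is_ideal I \<Longrightarrow> (\<And>K. is_ideal K \<Longrightarrow> I \<subset> K \<Longrightarrow> G K) \<Longrightarrow> G I"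
  shows "G I"
proof (rule ccontr)
  let ?C = "{I. is_ideal I \<and> \<not> G I}"
  assume "\<not> G I"
  then obtain M where M: "is_ideal M" "\<not> G M" and max: "\<And>K. K \<in> ?C \<Longrightarrow> M \<subseteq> K \<Longrightarrow> K = M"
    using noetherian_ring_has_maximal[OF assms(1), of ?C] assms(2) by blast
  have "G M"
  proof (rule step[OF M(1)])
    fix K assume "is_ideal K" "M \<subset> K"
    then show "G K" using max[of K] by blast
  qed
  with M(2) show False by blast
qed

lemma is_prime_ideal_colon_if_maximal:
  assumes M: "is_ideal M" and r0: "r0 \<notin> M"
    and max: "\<And>r. r \<notin> M \<Longrightarrow> colon M r0 \<subseteq> colon M r \<Longrightarrow> colon M r = colon M r0"
  shows "is_prime_ideal (colon M r0)"
  unfolding is_prime_ideal_def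
proof (intro conjI allI impI)
  show "is_ideal (colon M r0)"
    by (rule is_ideal_colon[OF M])
  show "1 \<notin> colon M r0"
    using r0 by (simp add: in_colon_iff)
  fix a b assume ab: "a * b \<in> colon M r0"
  show "a \<in> colon M r0 \<or> b \<in> colon M r0"
  proof (cases "a \<in> colon M r0")
    case False
    then have "a * r0 \<notin> M"
      by (simp add: in_colon_iff mult.commute)
    moreover have "colon M r0 \<subseteq> colon M (a * r0)"
    proof
      fix t assume "t \<in> colon M r0"
      then have "a * (t * r0) \<in> M"
        using ideal_mult_left[OF M] by (simp add: in_colon_iff)
      then show "t \<in> colon M (a * r0)"
        by (simp add: in_colon_iff mult_ac)
    qed
    ultimately have "colon M (a * r0) = colon M r0"
      by (rule max)
    moreover have "b \<in> colon M (a * r0)"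
      using ab by (simp add: in_colon_iff mult_ac)
    ultimately show ?thesis
      by simp
  qed simp
qed

lemma noetherian_ring_exists_prime_colon:
  assumes N: "noetherian_ring TYPE('a::comm_ring_1)" and M: "is_ideal (M :: 'a set)" and "1 \<notin> M"
  shows "\<exists>r. r \<notin> M \<and> is_prime_ideal (colon M r)"
proof -
  let ?D = "{colon M r | r. r \<notin> M}"
  obtain K where "K \<in> ?D" and max: "\<forall>K'\<in>?D. K \<subseteq> K' \<longrightarrow> K' = K"
    using noetherian_ring_has_maximal[OF N, of ?D] \<open>1 \<notin> M\<close> is_ideal_colon[OF M] by blast
  then obtain r0 where "r0 \<notin> M" "K = colon M r0"
    by blast
  then have "is_prime_ideal (colon M r0)"
    using max by (intro is_prime_ideal_colon_if_maximal[OF M]) auto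
  with \<open>r0 \<notin> M\<close> show ?thesis
    by blast
qed

subsection \<open>Minimal and associated primes\<close>

lemma radical_ideal_sum_principal_Int:
  assumes M: "is_ideal M" and xy: "x * y \<in> M"
  shows "radical (ideal_sum M (principal_ideal x)) \<inter> radical (ideal_sum M (principal_ideal y))
    \<subseteq> radical M"
proof
  fix w
  assume "w \<in> radical (ideal_sum M (principal_ideal x)) \<inter> radical (ideal_sum M (principal_ideal y))"
  then obtain m k j1 j2 r1 r2 where
    j: "j1 \<in> M" "j2 \<in> M" and e: "w ^ m = j1 + x * r1" "w ^ k = j2 + y * r2"
    unfolding Int_iff in_radical_iff in_ideal_sum_principal_iff by blast
  have "w ^ (m + k) = j1 * (j2 + y * r2) + j2 * (x * r1) + (x * y) * (r1 * r2)"
    by (simp add: power_add e algebra_simps)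
  also have "\<dots> \<in> M"
    using ideal_mult_right[OF M j(1)] ideal_mult_right[OF M j(2)] ideal_mult_right[OF M xy]
    by (intro ideal_add[OF M])
  finally show "w \<in> radical M"
    unfolding in_radical_iff by blast
qed

lemma radical_eq_Inter_finite_primes:
  assumes "noetherian_ring TYPE('a::comm_ring_1)" and "is_ideal (J :: 'a set)"
  shows "\<exists>\<Pi>. finite \<Pi> \<and> (\<forall>Q\<in>\<Pi>. is_prime_ideal Q) \<and> radical J = \<Inter>\<Pi>"
proof (rule noetherian_ring_ideal_induct[OF assms])
  fix I :: "'a set"
  assume I: "is_ideal I" and IH: "\<And>K. is_ideal K \<Longrightarrow> I \<subset> K \<Longrightarrow>
    \<exists>\<Pi>. finite \<Pi> \<and> (\<forall>Q\<in>\<Pi>. is_prime_ideal Q) \<and> radical K = \<Inter>\<Pi>"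
  show "\<exists>\<Pi>. finite \<Pi> \<and> (\<forall>Q\<in>\<Pi>. is_prime_ideal Q) \<and> radical I = \<Inter>\<Pi>"
  proof (cases "1 \<in> I \<or> is_prime_ideal I")
    case True
    then consider "I = UNIV" | "is_prime_ideal I"
      using ideal_eq_UNIV_if_one[OF I] by blast
    then show ?thesis
    proof cases
      case 1
      then show ?thesis by (intro exI[of _ "{}"]) (auto simp: radical_def)
    next
      case 2
      then show ?thesis
        by (intro exI[of _ "{I}"]) (simp add: radical_prime_ideal)
    qed
  next
    case False
    then obtain x y where xy: "x * y \<in> I" "x \<notin> I" "y \<notin> I"
      using I unfolding is_prime_ideal_def by blast
    have larger: "is_ideal (ideal_sum I (principal_ideal z))" "I \<subset> ideal_sum I (principal_ideal z)"
      if "z \<notin> I" for z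
      using that I is_ideal_principal_ideal mem_ideal_sum_principal
      by (auto intro: is_ideal_ideal_sum dest: ideal_sum_subset_left[of _ I])
    obtain \<Pi>1 \<Pi>2 where \<Pi>:
      "finite \<Pi>1" "\<forall>Q\<in>\<Pi>1. is_prime_ideal Q" "radical (ideal_sum I (principal_ideal x)) = \<Inter>\<Pi>1"
      "finite \<Pi>2" "\<forall>Q\<in>\<Pi>2. is_prime_ideal Q" "radical (ideal_sum I (principal_ideal y)) = \<Inter>\<Pi>2"
      using IH[OF larger[OF xy(2)]] IH[OF larger[OF xy(3)]] by blast
    have "radical I \<subseteq> \<Inter>(\<Pi>1 \<union> \<Pi>2)"
      using radical_mono[OF ideal_sum_subset_left[OF is_ideal_principal_ideal]] \<Pi>(3,6) by blast
    moreover have "\<Inter>(\<Pi>1 \<union> \<Pi>2) \<subseteq> radical I"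
      using radical_ideal_sum_principal_Int[OF I xy(1)] \<Pi>(3,6) by auto
    ultimately show ?thesis
      using \<Pi> by (intro exI[of _ "\<Pi>1 \<union> \<Pi>2"]) auto
  qed
qed

lemma prime_ideal_above_radical_contains_member:
  assumes "finite \<Pi>" "\<forall>Q\<in>\<Pi>. is_prime_ideal Q" "radical J = \<Inter>\<Pi>"
    and "is_prime_ideal P" "J \<subseteq> P"
  shows "\<exists>Q\<in>\<Pi>. Q \<subseteq> P"
proof (rule prime_ideal_contains_member_if_contains_Inter[OF assms(1) _ assms(4)])
  show "\<And>I. I \<in> \<Pi> \<Longrightarrow> is_ideal I" using assms(2) prime_ideal_is_ideal by blast
  show "\<Inter>\<Pi> \<subseteq> P" using radical_subset_prime[OF assms(4,5)] assms(3) by simp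
qed

lemma radical_eq_Inter_finite_minimal_primes:
  assumes "noetherian_ring TYPE('a::comm_ring_1)" and "is_ideal (J :: 'a set)"
  shows "\<exists>\<Pi>. finite \<Pi> \<and> (\<forall>Q\<in>\<Pi>. minimal_prime_over Q J) \<and> radical J = \<Inter>\<Pi>"
proof -
  obtain \<Pi> where \<Pi>: "finite \<Pi>" "\<forall>Q\<in>\<Pi>. is_prime_ideal Q" "radical J = \<Inter>\<Pi>"
    using radical_eq_Inter_finite_primes[OF assms] by blast
  define \<Pi>' where "\<Pi>' = {Q\<in>\<Pi>. \<forall>Q'\<in>\<Pi>. Q' \<subseteq> Q \<longrightarrow> Q' = Q}"
  have "\<exists>Q0\<in>\<Pi>'. Q0 \<subseteq> Q" if Q: "Q \<in> \<Pi>" for Q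
  proof -
    obtain Q0 where "Q0 \<in> \<Pi>" "Q0 \<subseteq> Q" "\<forall>Q'\<in>\<Pi>. Q' \<subseteq> Q0 \<longrightarrow> Q0 = Q'"
      using finite_has_minimal2[OF \<Pi>(1) Q] by blast
    then show ?thesis unfolding \<Pi>'_def by auto
  qed
  then have "\<Inter>\<Pi>' = \<Inter>\<Pi>"
    unfolding \<Pi>'_def by blast
  moreover have "minimal_prime_over Q J" if Q: "Q \<in> \<Pi>'" for Q
    unfolding minimal_prime_over_def
  proof (intro conjI notI)
    show "is_prime_ideal Q" "J \<subseteq> Q"
      using Q \<Pi> subset_radical[of J] by (auto simp: \<Pi>'_def)
    assume "\<exists>Q'. is_prime_ideal Q' \<and> J \<subseteq> Q' \<and> Q' \<subset> Q"
    then obtain Q' where "is_prime_ideal Q'" "J \<subseteq> Q'" "Q' \<subset> Q" by blast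
    moreover from this obtain Q1 where "Q1 \<in> \<Pi>" "Q1 \<subseteq> Q'"
      using prime_ideal_above_radical_contains_member[OF \<Pi>] by blast
    ultimately show False
      using Q unfolding \<Pi>'_def by blast
  qed
  ultimately show ?thesis
    using \<Pi> by (intro exI[of _ \<Pi>']) (auto simp: \<Pi>'_def)
qed

lemma minimal_prime_over_mem:
  assumes "finite \<Pi>" "\<forall>Q\<in>\<Pi>. is_prime_ideal Q" "radical J = \<Inter>\<Pi>" and P: "minimal_prime_over P J"
  shows "P \<in> \<Pi>"
proof -
  obtain Q where "Q \<in> \<Pi>" "Q \<subseteq> P"
    using prime_ideal_above_radical_contains_member[OF assms(1-3)] P
    unfolding minimal_prime_over_def by blast
  moreover have "J \<subseteq> Q"
    using \<open>Q \<in> \<Pi>\<close> assms(3) subset_radical by blast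
  ultimately show ?thesis
    using assms(2) P unfolding minimal_prime_over_def by blast
qed

lemma minimal_prime_over_exists_multiplier:
  assumes "noetherian_ring TYPE('a::comm_ring_1)" and "is_ideal (J :: 'a set)"
    and P: "minimal_prime_over P J"
  shows "\<exists>u. u \<notin> P \<and> (\<forall>r\<in>P. r * u \<in> radical J)"
proof -
  obtain \<Pi> where \<Pi>: "finite \<Pi>" "\<forall>Q\<in>\<Pi>. minimal_prime_over Q J" "radical J = \<Inter>\<Pi>"
    using radical_eq_Inter_finite_minimal_primes[OF assms(1,2)] by blast
  have primes: "\<forall>Q\<in>\<Pi>. is_prime_ideal Q"
    using \<Pi>(2) unfolding minimal_prime_over_def by blast
  have "P \<in> \<Pi>"
    by (rule minimal_prime_over_mem[OF \<Pi>(1) primes \<Pi>(3) P])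
  have "\<not> \<Inter>(\<Pi> - {P}) \<subseteq> P"
  proof
    assume "\<Inter>(\<Pi> - {P}) \<subseteq> P"
    then obtain Q where "Q \<in> \<Pi> - {P}" "Q \<subseteq> P"
      using prime_ideal_contains_member_if_contains_Inter[of "\<Pi> - {P}" P] \<Pi>(1) primes P
      unfolding minimal_prime_over_def by (meson DiffD1 finite_Diff prime_ideal_is_ideal)
    then show False
      using \<Pi>(2) P unfolding minimal_prime_over_def by blast
  qed
  then obtain u where u: "u \<in> \<Inter>(\<Pi> - {P})" "u \<notin> P" by blast
  have "r * u \<in> Q" if r: "r \<in> P" and Q: "Q \<in> \<Pi>" for r Q
  proof (cases "Q = P")
    case True
    then show ?thesis using ideal_mult_right[OF prime_ideal_is_ideal r] primes Q by blast
  next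
    case False
    then have "u \<in> Q" using u(1) Q by blast
    then show ?thesis using ideal_mult_left[OF prime_ideal_is_ideal] primes Q by blast
  qed
  then show ?thesis
    using u(2) \<Pi>(3) by blast
qed

text \<open>The colons \<open>J : u\<^sup>n\<close> form an ascending chain; once it is stationary,
  \<open>J : u\<^sup>n\<close> lies in \<open>P\<close> and contains a power of every element of \<open>P\<close>.\<close>
lemma minimal_prime_over_eq_radical_colon:
  assumes N: "noetherian_ring TYPE('a::comm_ring_1)" and J: "is_ideal (J :: 'a set)"
    and P: "minimal_prime_over P J"
  shows "\<exists>c. P = radical (colon J c)"
proof -
  obtain u where u: "u \<notin> P" "\<And>r. r \<in> P \<Longrightarrow> r * u \<in> radical J"
    using minimal_prime_over_exists_multiplier[OF assms] by blast
  have Pp: "is_prime_ideal P" and JP: "J \<subseteq> P"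
    using P unfolding minimal_prime_over_def by auto
  have "colon J (u ^ n) \<subseteq> colon J (u ^ Suc n)" for n
  proof
    fix r assume "r \<in> colon J (u ^ n)"
    then have "r * u ^ n * u \<in> J"
      using ideal_mult_right[OF J] by (simp add: in_colon_iff)
    then show "r \<in> colon J (u ^ Suc n)"
      by (simp add: in_colon_iff mult_ac)
  qed
  then obtain N where N: "\<And>n. colon J (u ^ n) \<subseteq> colon J (u ^ N)"
    using noetherian_ring_ascending_chain_bounded[OF N is_ideal_colon[OF J]] by blast
  have "colon J (u ^ N) \<subseteq> P"
  proof
    fix r assume "r \<in> colon J (u ^ N)"
    then have "r * u ^ N \<in> P" using JP by (auto simp: in_colon_iff)
    then show "r \<in> P" using u(1) prime_ideal_mult[OF Pp] prime_ideal_power[OF Pp] by blast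
  qed
  moreover have "P \<subseteq> radical (colon J (u ^ N))"
  proof
    fix r assume "r \<in> P"
    then obtain m where "(r * u) ^ m \<in> J"
      using u(2) unfolding in_radical_iff by blast
    then have "r ^ m \<in> colon J (u ^ N)"
      using N[of m] by (auto simp: in_colon_iff power_mult_distrib)
    then show "r \<in> radical (colon J (u ^ N))"
      unfolding in_radical_iff by blast
  qed
  ultimately show ?thesis
    using radical_subset_prime[OF Pp] by blast
qed

lemma associated_prime_eq_radical_colon:
  assumes "noetherian_ring TYPE('a::comm_ring_1)" and "is_ideal (I :: 'a set)"
    and "associated_prime P I"
  shows "\<exists>a. P = radical (colon I a)"
proof -
  obtain a where "minimal_prime_over P (colon I a)"
    using assms(3) unfolding associated_prime_def by blast
  then obtain c where "P = radical (colon (colon I a) c)"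
    using minimal_prime_over_eq_radical_colon[OF assms(1) is_ideal_colon[OF assms(2)]] by blast
  then show ?thesis
    unfolding colon_colon by blast
qed

lemma associated_primeD:
  assumes "is_ideal I" "associated_prime P I"
  shows "is_prime_ideal P" "I \<subseteq> P"
proof -
  obtain a where "minimal_prime_over P (colon I a)"
    using assms(2) unfolding associated_prime_def by blast
  moreover have "I \<subseteq> colon I a"
    using ideal_mult_right[OF assms(1)] by (auto simp: in_colon_iff)
  ultimately show "is_prime_ideal P" "I \<subseteq> P"
    unfolding minimal_prime_over_def by blast+
qed

lemma radical_colon_zero_eq:
  assumes P: "is_prime_ideal P" and a: "P = radical (colon (principal_ideal (0::'a::idom)) a)"
  shows "P = radical (principal_ideal 0)"
proof -
  have "a \<noteq> 0"
  proof
    assume "a = 0"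
    then have "1 \<in> P"
      using a by (simp add: in_radical_iff in_colon_principal_iff)
    with prime_ideal_one_notin[OF P] show False ..
  qed
  then have "colon (principal_ideal 0) a = principal_ideal 0"
    by (auto simp: in_colon_principal_iff in_principal_ideal_iff)
  then show ?thesis
    using a by simp
qed

subsection \<open>Krull's principal ideal theorem\<close>

text \<open>\<open>saturation P I\<close> is the contraction of \<open>I A\<^sub>P\<close>, and the \<open>P\<close>-saturated ideals are
  exactly the contractions of ideals of \<open>A\<^sub>P\<close>.\<close>
definition saturation :: "'a::comm_ring_1 set \<Rightarrow> 'a set \<Rightarrow> 'a set" where
  "saturation P I = {r. \<exists>s. s \<notin> P \<and> s * r \<in> I}"

definition saturated :: "'a::comm_ring_1 set \<Rightarrow> 'a set \<Rightarrow> bool" where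
  "saturated P I \<longleftrightarrow> (\<forall>s r. s \<notin> P \<longrightarrow> s * r \<in> I \<longrightarrow> r \<in> I)"

lemma in_saturation_iff: "r \<in> saturation P I \<longleftrightarrow> (\<exists>s. s \<notin> P \<and> s * r \<in> I)"
  by (simp add: saturation_def)

lemma saturatedD: "saturated P I \<Longrightarrow> s \<notin> P \<Longrightarrow> s * r \<in> I \<Longrightarrow> r \<in> I"
  by (simp add: saturated_def)

lemma is_ideal_saturation:
  assumes P: "is_prime_ideal P" and I: "is_ideal I"
  shows "is_ideal (saturation P I)"
  unfolding is_ideal_def
proof (intro conjI ballI allI)
  show "0 \<in> saturation P I"
    unfolding in_saturation_iff using prime_ideal_one_notin[OF P] ideal_zero[OF I] by force
next
  fix a b assume "a \<in> saturation P I" "b \<in> saturation P I"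
  then obtain s t where st: "s \<notin> P" "s * a \<in> I" "t \<notin> P" "t * b \<in> I"
    unfolding in_saturation_iff by blast
  have "(s * t) * (a + b) = t * (s * a) + s * (t * b)"
    by (simp add: algebra_simps)
  also have "\<dots> \<in> I"
    using ideal_mult_left[OF I st(2)] ideal_mult_left[OF I st(4)] by (rule ideal_add[OF I])
  finally show "a + b \<in> saturation P I"
    unfolding in_saturation_iff using prime_ideal_mult_notin[OF P st(1,3)] by blast
next
  fix a c assume "a \<in> saturation P I"
  then obtain s where "s \<notin> P" "s * a \<in> I"
    unfolding in_saturation_iff by blast
  then show "c * a \<in> saturation P I"
    unfolding in_saturation_iff using ideal_mult_left[OF I, of "s * a" c]
    by (metis mult.left_commute)
qed

lemma subset_saturation: "is_prime_ideal P \<Longrightarrow> I \<subseteq> saturation P I"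
  unfolding saturation_def using prime_ideal_one_notin by (auto intro!: exI[of _ 1])

lemma saturated_saturation:
  assumes P: "is_prime_ideal P"
  shows "saturated P (saturation P I)"
  unfolding saturated_def in_saturation_iff
  using prime_ideal_mult_notin[OF P] by (metis mult.assoc)

lemma saturation_mono: "I \<subseteq> I' \<Longrightarrow> saturation P I \<subseteq> saturation P I'"
  unfolding saturation_def by blast

lemma saturation_least: "saturated P K \<Longrightarrow> I \<subseteq> K \<Longrightarrow> saturation P I \<subseteq> K"
  unfolding saturation_def saturated_def by blast

lemma saturated_Int: "saturated P I \<Longrightarrow> saturated P K \<Longrightarrow> saturated P (I \<inter> K)"
  unfolding saturated_def by blast

text \<open>This says that \<open>A\<^sub>P / I A\<^sub>P\<close> is Artinian.\<close>
definition dcc_saturated :: "'a::comm_ring_1 set \<Rightarrow> 'a set \<Rightarrow> bool" where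
  "dcc_saturated P I \<longleftrightarrow>
     (\<forall>f. (\<forall>n. is_ideal (f n) \<and> saturated P (f n) \<and> I \<subseteq> f n \<and> f (Suc n) \<subseteq> f n)
        \<longrightarrow> (\<exists>N. \<forall>n\<ge>N. f n = f N))"

lemma dcc_saturatedD:
  assumes "dcc_saturated P I" and "\<And>n. is_ideal (f n)" "\<And>n. saturated P (f n)"
    and "\<And>n. I \<subseteq> f n" "\<And>n. f (Suc n) \<subseteq> f n"
  shows "\<exists>N. \<forall>n\<ge>N. f n = f N"
  using assms unfolding dcc_saturated_def by blast

lemma dcc_saturatedI:
  assumes "\<And>f. (\<And>n. is_ideal (f n)) \<Longrightarrow> (\<And>n. saturated P (f n)) \<Longrightarrow> (\<And>n. I \<subseteq> f n)
    \<Longrightarrow> (\<And>n. f (Suc n) \<subseteq> f n) \<Longrightarrow> \<exists>N. \<forall>n\<ge>N. f n = f N"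
  shows "dcc_saturated P I"
  using assms unfolding dcc_saturated_def by blast

lemma dcc_saturated_UNIV: "dcc_saturated P UNIV"
  unfolding dcc_saturated_def by (auto intro!: exI[of _ 0])

text \<open>The modular law: a descending chain is determined by its sums with and its
  intersections with a fixed ideal \<open>K\<close>.\<close>
lemma saturated_chain_stabilizes:
  assumes P: "is_prime_ideal P"
    and f: "\<And>n. is_ideal (f n)" "\<And>n. saturated P (f n)" "\<And>n. f (Suc n) \<subseteq> f n"
    and K: "is_ideal K"
    and sum: "\<exists>N. \<forall>n\<ge>N. saturation P (ideal_sum (f n) K) = saturation P (ideal_sum (f N) K)"
    and Int: "\<exists>N. \<forall>n\<ge>N. f n \<inter> K = f N \<inter> K"
  shows "\<exists>N. \<forall>n\<ge>N. f n = f N"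
proof -
  obtain N1 N2
    where N1: "\<forall>n\<ge>N1. saturation P (ideal_sum (f n) K) = saturation P (ideal_sum (f N1) K)"
      and N2: "\<forall>n\<ge>N2. f n \<inter> K = f N2 \<inter> K"
    using sum Int by blast
  define N where "N = max N1 N2"
  have "f N \<subseteq> f n" if n: "N \<le> n" for n
  proof
    fix c assume c: "c \<in> f N"
    have "c \<in> saturation P (ideal_sum (f N) K)"
      using c subset_saturation[OF P] ideal_sum_subset_left[OF K] by blast
    also have "\<dots> = saturation P (ideal_sum (f n) K)"
      using N1[rule_format, of N] N1[rule_format, of n] n by (simp add: N_def)
    finally obtain s a b where s: "s \<notin> P" "a \<in> f n" "b \<in> K" "s * c = a + b"
      unfolding in_saturation_iff in_ideal_sum_iff by blast
    have "a \<in> f N"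
      using s(2) lift_Suc_antimono_le[of f, OF f(3) n] by blast
    then have "b \<in> f N \<inter> K"
      using ideal_diff[OF f(1) ideal_mult_left[OF f(1) c, of s] \<open>a \<in> f N\<close>] s(3,4) by simp
    also have "\<dots> = f n \<inter> K"
      using N2[rule_format, of N] N2[rule_format, of n] n by (simp add: N_def)
    finally have "s * c \<in> f n"
      using ideal_add[OF f(1) s(2)] s(4) by simp
    then show "c \<in> f n"
      using saturatedD[OF f(2) s(1)] by blast
  qed
  then have "f n = f N" if "N \<le> n" for n
    using lift_Suc_antimono_le[of f, OF f(3) that] that by blast
  then show ?thesis
    by blast
qed

text \<open>As \<open>M : r\<^sub>0 = P\<close>, the module \<open>(M + r\<^sub>0 A)\<^sub>P / M\<^sub>P\<close> is the residue field of \<open>A\<^sub>P\<close>,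
  which has no proper nonzero submodules.\<close>
lemma saturated_between_ideal_sum_principal:
  assumes M: "is_ideal M" "saturated P M" and r0: "colon M r0 = P"
    and J: "is_ideal J" "saturated P J" "M \<subseteq> J"
      "J \<subseteq> saturation P (ideal_sum M (principal_ideal r0))"
  shows "J = M \<or> J = saturation P (ideal_sum M (principal_ideal r0))"
proof (rule disjCI)
  assume "J \<noteq> saturation P (ideal_sum M (principal_ideal r0))"
  show "J = M"
  proof (rule ccontr)
    assume "J \<noteq> M"
    then obtain j where j: "j \<in> J" "j \<notin> M"
      using J(3) by blast
    then have "j \<in> saturation P (ideal_sum M (principal_ideal r0))"
      using J(4) by blast
    then obtain s i c where s: "s \<notin> P" "i \<in> M" "s * j = i + r0 * c"
      unfolding in_saturation_iff in_ideal_sum_principal_iff by blast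
    have "c \<notin> P"
    proof
      assume "c \<in> P"
      then have "s * j \<in> M"
        using r0 s(2,3) ideal_add[OF M(1)] by (auto simp: in_colon_iff mult.commute)
      then show False
        using saturatedD[OF M(2) s(1)] j(2) by blast
    qed
    moreover have "c * r0 = s * j - i"
      using s(3) by (simp add: algebra_simps)
    then have "c * r0 \<in> J"
      using ideal_diff[OF J(1) ideal_mult_left[OF J(1) j(1)]] s(2) J(3) by auto
    ultimately have "r0 \<in> J"
      using saturatedD[OF J(2)] by blast
    then have "saturation P (ideal_sum M (principal_ideal r0)) \<subseteq> J"
      using J principal_ideal_subset[OF J(1)] by (intro saturation_least ideal_sum_least)
    with J(4) \<open>J \<noteq> saturation P _\<close> show False
      by blast
  qed
qed

lemma dcc_saturated_of_minimal_extension: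
  assumes P: "is_prime_ideal P" and M: "saturated P M"
    and K: "is_ideal K" "saturated P K" "M \<subseteq> K" "dcc_saturated P K"
    and between: "\<And>J. is_ideal J \<Longrightarrow> saturated P J \<Longrightarrow> M \<subseteq> J \<Longrightarrow> J \<subseteq> K \<Longrightarrow> J = M \<or> J = K"
  shows "dcc_saturated P M"
proof (rule dcc_saturatedI)
  fix f assume f: "\<And>n. is_ideal (f n)" "\<And>n. saturated P (f n)" "\<And>n. M \<subseteq> f n"
    "\<And>n. f (Suc n) \<subseteq> f n"
  show "\<exists>N. \<forall>n\<ge>N. f n = f N"
  proof (rule saturated_chain_stabilizes[where f = f and K = K, OF P f(1) f(2) f(4) K(1)])
    show "\<exists>N. \<forall>n\<ge>N. saturation P (ideal_sum (f n) K) = saturation P (ideal_sum (f N) K)"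
    proof (rule dcc_saturatedD[OF K(4)])
      fix n
      show "is_ideal (saturation P (ideal_sum (f n) K))"
        by (intro is_ideal_saturation P is_ideal_ideal_sum f(1) K(1))
      show "saturated P (saturation P (ideal_sum (f n) K))"
        by (rule saturated_saturation[OF P])
      show "K \<subseteq> saturation P (ideal_sum (f n) K)"
        using ideal_sum_subset_right[OF f(1)] subset_saturation[OF P] by blast
      show "saturation P (ideal_sum (f (Suc n)) K) \<subseteq> saturation P (ideal_sum (f n) K)"
        by (intro saturation_mono ideal_sum_mono f(4) order_refl)
    qed
  next
    have MK: "f n \<inter> K = M \<or> f n \<inter> K = K" for n
      using f K M by (intro between is_ideal_Int saturated_Int) auto
    show "\<exists>N. \<forall>n\<ge>N. f n \<inter> K = f N \<inter> K"
    proof (cases "\<exists>n0. f n0 \<inter> K = M")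
      case True
      then obtain n0 where n0: "f n0 \<inter> K = M" by blast
      have "f n \<inter> K = f n0 \<inter> K" if "n0 \<le> n" for n
        using lift_Suc_antimono_le[of f, OF f(4) that] n0 f(3)[of n] K(3) by blast
      then show ?thesis by blast
    next
      case False
      then show ?thesis
        using MK by (metis order_refl)
    qed
  qed
qed

lemma colon_eq_prime_if_saturated:
  assumes M: "is_ideal M" "saturated P M" and r0: "r0 \<notin> M" "is_prime_ideal (colon M r0)"
    and y: "y \<in> M" "P \<subseteq> radical (principal_ideal y)"
  shows "colon M r0 = P"
proof
  show "colon M r0 \<subseteq> P"
  proof
    fix t assume "t \<in> colon M r0"
    then have "t * r0 \<in> M"
      by (simp add: in_colon_iff)
    then show "t \<in> P"
      using saturatedD[OF M(2)] r0(1) by blast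
  qed
  have "principal_ideal y \<subseteq> colon M r0"
    using principal_ideal_subset[OF is_ideal_colon[OF M(1)]] ideal_mult_right[OF M(1) y(1)]
    by (simp add: in_colon_iff)
  then show "P \<subseteq> colon M r0"
    using radical_subset_prime[OF r0(2)] y(2) by blast
qed

text \<open>Noetherian induction: a maximal counterexample \<open>M\<close> would have a prime colon
  \<open>M : r\<^sub>0\<close>, necessarily equal to \<open>P\<close>, and the next larger \<open>P\<close>-saturated ideal
  \<open>(M + r\<^sub>0 A)\<^sub>P \<inter> A\<close> lies only one step above \<open>M\<close>.\<close>
theorem dcc_saturated_if_radical_principal:
  assumes N: "noetherian_ring TYPE('a::comm_ring_1)" and P: "is_prime_ideal (P :: 'a set)"
    and rad: "P \<subseteq> radical (principal_ideal y)"
    and I: "is_ideal I" "saturated P I" "y \<in> I"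
  shows "dcc_saturated P I"
proof -
  have "saturated P I \<longrightarrow> y \<in> I \<longrightarrow> dcc_saturated P I"
  proof (rule noetherian_ring_ideal_induct[OF N I(1)])
    fix M assume M: "is_ideal M"
      and IH: "\<And>K. is_ideal K \<Longrightarrow> M \<subset> K \<Longrightarrow> saturated P K \<longrightarrow> y \<in> K \<longrightarrow> dcc_saturated P K"
    show "saturated P M \<longrightarrow> y \<in> M \<longrightarrow> dcc_saturated P M"
    proof (intro impI)
      assume sat: "saturated P M" and y: "y \<in> M"
      show "dcc_saturated P M"
      proof (cases "1 \<in> M")
        case True
        then show ?thesis
          using ideal_eq_UNIV_if_one[OF M] dcc_saturated_UNIV by simp
      next
        case False
        then obtain r0 where r0: "r0 \<notin> M" "is_prime_ideal (colon M r0)"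
          using noetherian_ring_exists_prime_colon[OF N M] by blast
        have colon: "colon M r0 = P"
          by (rule colon_eq_prime_if_saturated[OF M sat r0 y rad])
        define K where "K = saturation P (ideal_sum M (principal_ideal r0))"
        have K: "is_ideal K" "saturated P K" "M \<subseteq> K" "r0 \<in> K"
          unfolding K_def using M mem_ideal_sum_principal[OF M, of r0] subset_saturation[OF P]
            ideal_sum_subset_left[OF is_ideal_principal_ideal, of M r0]
          by (auto intro: is_ideal_saturation[OF P] is_ideal_ideal_sum is_ideal_principal_ideal
              saturated_saturation[OF P])
        then have "dcc_saturated P K"
          using IH[of K] r0(1) y by blast
        then show ?thesis
          using saturated_between_ideal_sum_principal[OF M sat colon] K sat
          by (intro dcc_saturated_of_minimal_extension[OF P sat K(1-3)]) (auto simp: K_def)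
      qed
    qed
  qed
  with I(2,3) show ?thesis
    by blast
qed

lemma saturated_mem_if_cross_multiples:
  assumes P: "is_prime_ideal P" and Z: "is_ideal Z" "saturated Q Z" and QP: "Q \<subseteq> P"
    and y: "y \<in> P" and s: "s \<notin> P" and u: "u \<notin> P"
    and "s * r - y * a \<in> Z" and "u * a - t * r \<in> Z"
  shows "r \<in> Z"
proof -
  have "(u * s - y * t) * r = u * (s * r - y * a) + y * (u * a - t * r)"
    by (simp add: algebra_simps)
  also have "\<dots> \<in> Z"
    using assms(8,9) by (intro ideal_add[OF Z(1)] ideal_mult_left[OF Z(1)])
  finally have "(u * s - y * t) * r \<in> Z" .
  moreover have "u * s - y * t \<notin> P"
  proof
    assume "u * s - y * t \<in> P"
    then have "u * s - y * t + y * t \<in> P"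
      using ideal_add[OF prime_ideal_is_ideal[OF P] _ ideal_mult_right[OF prime_ideal_is_ideal[OF P] y]]
      by blast
    then show False
      using prime_ideal_mult_notin[OF P u s] by simp
  qed
  ultimately show ?thesis
    using saturatedD[OF Z(2)] QP by blast
qed

lemma exists_cross_multiple:
  assumes Z: "is_ideal Z" "saturated Q Z" and Z': "is_ideal Z'" "saturated Q Z'" "Z' \<subseteq> Z"
    and QP: "Q \<subseteq> P" and yQ: "y \<notin> Q"
    and H: "Z \<subseteq> saturation P (ideal_sum (principal_ideal y) Z')"
    and r: "r \<in> Z" "r \<notin> Z'"
  shows "\<exists>a s. a \<in> Z \<and> a \<notin> Z' \<and> s \<notin> P \<and> s * r - y * a \<in> Z'"
proof -
  have "r \<in> saturation P (ideal_sum (principal_ideal y) Z')"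
    using H r(1) by blast
  then obtain s p b where "s \<notin> P" "p \<in> principal_ideal y" "b \<in> Z'" "s * r = p + b"
    unfolding in_saturation_iff in_ideal_sum_iff by blast
  then obtain a where s: "s \<notin> P" "b \<in> Z'" "s * r = y * a + b"
    unfolding principal_ideal_def by blast
  have "y * a = s * r - b"
    using s(3) by simp
  also have "\<dots> \<in> Z"
    using ideal_diff[OF Z(1) ideal_mult_left[OF Z(1) r(1)]] s(2) Z'(3) by blast
  finally have "a \<in> Z"
    using saturatedD[OF Z(2) yQ] by blast
  moreover have "a \<notin> Z'"
  proof
    assume "a \<in> Z'"
    then have "s * r \<in> Z'"
      using s(2,3) ideal_add[OF Z'(1) ideal_mult_left[OF Z'(1)]] by simp
    then show False
      using saturatedD[OF Z'(2)] s(1) QP r(2) by blast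
  qed
  ultimately show ?thesis
    using s by (intro exI[of _ a] exI[of _ s]) simp
qed

text \<open>Nakayama's lemma for the \<open>A\<^sub>P\<close>-module \<open>Z\<^sub>P / Z'\<^sub>P\<close>. Finite generation enters through
  an \<open>r \<in> Z - Z'\<close> for which \<open>(Z' + r A)\<^sub>P\<close> is maximal.\<close>
lemma nakayama_saturated:
  assumes N: "noetherian_ring TYPE('a::comm_ring_1)" and P: "is_prime_ideal (P :: 'a set)"
    and QP: "Q \<subseteq> P" and y: "y \<in> P" "y \<notin> Q"
    and Z: "is_ideal Z" "saturated Q Z" and Z': "is_ideal Z'" "saturated Q Z'" "Z' \<subseteq> Z"
    and H: "Z \<subseteq> saturation P (ideal_sum (principal_ideal y) Z')"
  shows "Z \<subseteq> Z'"
proof (rule ccontr)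
  let ?S = "\<lambda>r. saturation P (ideal_sum Z' (principal_ideal r))"
  let ?D = "{?S r | r. r \<in> Z \<and> r \<notin> Z'}"
  assume "\<not> Z \<subseteq> Z'"
  then have "?D \<noteq> {}" by blast
  moreover have "\<And>K. K \<in> ?D \<Longrightarrow> is_ideal K"
    using is_ideal_saturation[OF P is_ideal_ideal_sum[OF Z'(1) is_ideal_principal_ideal]] by blast
  ultimately obtain r where r: "r \<in> Z" "r \<notin> Z'" and max: "\<forall>K\<in>?D. ?S r \<subseteq> K \<longrightarrow> K = ?S r"
    using noetherian_ring_has_maximal[OF N, of ?D] by blast
  obtain a s where a: "a \<in> Z" "a \<notin> Z'" and s: "s \<notin> P" "s * r - y * a \<in> Z'"
    using exists_cross_multiple[OF Z Z' QP y(2) H r] by blast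
  have "s * r \<in> ideal_sum Z' (principal_ideal a)"
    using s(2) unfolding in_ideal_sum_principal_iff
    by (intro bexI[of _ "s * r - y * a"] exI[of _ y]) (simp_all add: mult.commute)
  then have "s * r \<in> ?S a"
    using subset_saturation[OF P] by blast
  then have "r \<in> ?S a"
    by (rule saturatedD[OF saturated_saturation[OF P] s(1)])
  have Sa: "is_ideal (?S a)"
    by (rule is_ideal_saturation[OF P is_ideal_ideal_sum[OF Z'(1) is_ideal_principal_ideal]])
  have "Z' \<subseteq> ?S a"
    using ideal_sum_subset_left[OF is_ideal_principal_ideal] subset_saturation[OF P] by blast
  then have "?S r \<subseteq> ?S a"
    using principal_ideal_subset[OF Sa \<open>r \<in> ?S a\<close>]
    by (intro saturation_least[OF saturated_saturation[OF P]] ideal_sum_least[OF Sa])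
  then have "?S a = ?S r"
    using max a by blast
  then have "a \<in> ?S r"
    using subset_saturation[OF P] mem_ideal_sum_principal[OF Z'(1)] by blast
  then obtain u j t where u: "u \<notin> P" "j \<in> Z'" "u * a = j + r * t"
    unfolding in_saturation_iff in_ideal_sum_principal_iff by blast
  then have "u * a - t * r \<in> Z'"
    by (simp add: mult.commute)
  have "r \<in> Z'"
    using saturated_mem_if_cross_multiples[OF P Z'(1,2) QP y(1) s(1) u(1) s(2)]
      \<open>u * a - t * r \<in> Z'\<close> by blast
  with r(2) show False ..
qed

text \<open>A descending chain of \<open>Q\<close>-saturated ideals becomes stationary modulo \<open>y\<close> in the
  Artinian ring \<open>A\<^sub>P / yA\<^sub>P\<close>, and Nakayama's lemma lifts this since \<open>y\<close> is a unit in \<open>A\<^sub>Q\<close>.\<close>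
lemma dcc_saturated_below_radical_principal:
  assumes N: "noetherian_ring TYPE('a::comm_ring_1)" and P: "is_prime_ideal (P :: 'a set)"
    and rad: "P \<subseteq> radical (principal_ideal y)" and y: "y \<in> P"
    and QP: "Q \<subseteq> P" and yQ: "y \<notin> Q"
  shows "dcc_saturated Q {0}"
proof (rule dcc_saturatedI)
  fix Z assume Z: "\<And>n. is_ideal (Z n)" "\<And>n. saturated Q (Z n)" "\<And>n. Z (Suc n) \<subseteq> Z n"
  define C where "C n = saturation P (ideal_sum (principal_ideal y) (Z n))" for n
  have dcc: "dcc_saturated P (saturation P (principal_ideal y))"
    using subset_saturation[OF P] principal_ideal_self
    by (intro dcc_saturated_if_radical_principal[OF N P rad] is_ideal_saturation[OF P]
        is_ideal_principal_ideal saturated_saturation[OF P]) blast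
  have "\<exists>N. \<forall>n\<ge>N. C n = C N"
  proof (rule dcc_saturatedD[OF dcc])
    fix n
    show "is_ideal (C n)"
      unfolding C_def
      by (intro is_ideal_saturation[OF P] is_ideal_ideal_sum is_ideal_principal_ideal Z(1))
    show "saturated P (C n)"
      unfolding C_def by (rule saturated_saturation[OF P])
    show "saturation P (principal_ideal y) \<subseteq> C n"
      unfolding C_def by (intro saturation_mono ideal_sum_subset_left Z(1))
    show "C (Suc n) \<subseteq> C n"
      unfolding C_def by (intro saturation_mono ideal_sum_mono Z(3) order_refl)
  qed
  then obtain N0 where N0: "\<forall>n\<ge>N0. C n = C N0"
    by blast
  have step: "Z (Suc n) = Z n" if "N0 \<le> n" for n
  proof
    have "Z n \<subseteq> C n"
      unfolding C_def
      using ideal_sum_subset_right[OF is_ideal_principal_ideal] subset_saturation[OF P] by blast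
    also have "C n = C (Suc n)"
      using N0[rule_format, of n] N0[rule_format, of "Suc n"] that by simp
    finally show "Z n \<subseteq> Z (Suc n)"
      unfolding C_def by (rule nakayama_saturated[OF N P QP y yQ Z(1,2) Z(1,2) Z(3)])
  qed (rule Z(3))
  have "Z n = Z N0" if "N0 \<le> n" for n
    using that by (induction n rule: dec_induct) (auto simp: step)
  then show "\<exists>N. \<forall>n\<ge>N. Z n = Z N"
    by blast
qed

lemma power_notin_saturation_principal_Suc_power:
  assumes Q: "is_prime_ideal Q" and z: "z \<in> Q" "(z::'a::idom) \<noteq> 0"
  shows "z ^ n \<notin> saturation Q (principal_ideal (z ^ Suc n))"
proof
  assume "z ^ n \<in> saturation Q (principal_ideal (z ^ Suc n))"
  then obtain s c where s: "s \<notin> Q" "s * z ^ n = z ^ Suc n * c"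
    unfolding in_saturation_iff principal_ideal_def by blast
  then have "s = z * c"
    using z(2) by (simp add: mult_ac)
  then show False
    using s(1) ideal_mult_right[OF prime_ideal_is_ideal[OF Q] z(1)] by simp
qed

text \<open>If \<open>0 \<noteq> z \<in> Q\<close>, the symbolic powers \<open>(z\<^sup>n A)\<^sub>Q \<inter> A\<close> would form a strictly descending
  chain.\<close>
lemma prime_eq_zero_if_dcc_saturated:
  assumes Q: "is_prime_ideal (Q :: 'a::idom set)" and dcc: "dcc_saturated Q {0}"
  shows "Q = {0}"
proof -
  have "z = 0" if z: "z \<in> Q" for z
  proof (rule ccontr)
    assume "z \<noteq> 0"
    define Z where "Z n = saturation Q (principal_ideal (z ^ n))" for n
    have "\<exists>N. \<forall>n\<ge>N. Z n = Z N"
    proof (rule dcc_saturatedD[OF dcc])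
      fix n
      show "is_ideal (Z n)" "saturated Q (Z n)" "{0} \<subseteq> Z n"
        unfolding Z_def
        using ideal_zero is_ideal_saturation[OF Q is_ideal_principal_ideal]
        by (auto intro: saturated_saturation[OF Q])
      show "Z (Suc n) \<subseteq> Z n"
        unfolding Z_def
        by (intro saturation_mono principal_ideal_subset is_ideal_principal_ideal)
          (simp add: in_principal_ideal_iff)
    qed
    then obtain N where "\<forall>n\<ge>N. Z n = Z N"
      by blast
    moreover have "z ^ N \<in> Z N"
      unfolding Z_def using subset_saturation[OF Q] principal_ideal_self by blast
    ultimately have "z ^ N \<in> Z (Suc N)"
      by (metis le_SucI order_refl)
    then show False
      using power_notin_saturation_principal_Suc_power[OF Q z \<open>z \<noteq> 0\<close>] by (simp add: Z_def)
  qed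
  then show ?thesis
    using ideal_zero[OF prime_ideal_is_ideal[OF Q]] by blast
qed

theorem principal_ideal_theorem:
  assumes N: "noetherian_ring TYPE('a::idom)" and P: "is_prime_ideal P"
    and Py: "P = radical (principal_ideal (y::'a))" and Q: "is_prime_ideal Q" "Q \<subset> P"
  shows "Q = {0}"
proof (rule prime_eq_zero_if_dcc_saturated[OF Q(1)])
  have y: "y \<in> P"
    unfolding Py using subset_radical principal_ideal_self by blast
  have "y \<notin> Q"
  proof
    assume "y \<in> Q"
    then have "P \<subseteq> Q"
      unfolding Py
      by (intro radical_subset_prime[OF Q(1)]
          principal_ideal_subset[OF prime_ideal_is_ideal[OF Q(1)]])
    with Q(2) show False
      by blast
  qed
  then show "dcc_saturated Q {0}"
    using Q(2) by (intro dcc_saturated_below_radical_principal[OF N P _ y]) (auto simp: Py)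
qed

lemma no_embedded_associated_prime:
  assumes N: "noetherian_ring TYPE('a::idom)"
    and H: "\<forall>(x::'a) P. associated_prime P (principal_ideal x) \<longrightarrow>
      (\<exists>y. P = radical (principal_ideal y))"
    and x: "(x::'a) \<noteq> 0"
  shows "\<not> embedded_associated_prime P (principal_ideal x)"
proof
  assume "embedded_associated_prime P (principal_ideal x)"
  then obtain Q where AP: "associated_prime P (principal_ideal x)"
    and AQ: "associated_prime Q (principal_ideal x)" and QP: "Q \<subset> P"
    unfolding embedded_associated_prime_def by blast
  obtain y where "P = radical (principal_ideal y)"
    using H AP by blast
  then have "Q = {0}"
    using associated_primeD[OF is_ideal_principal_ideal AP]
      associated_primeD[OF is_ideal_principal_ideal AQ] QP
    by (intro principal_ideal_theorem[OF N]) auto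
  moreover have "x \<in> Q"
    using associated_primeD(2)[OF is_ideal_principal_ideal AQ] principal_ideal_self by blast
  ultimately show False
    using x by blast
qed

subsection \<open>Localizations and sublocalizations\<close>

lemma mult_closed_nonzero_nonzero: "mult_closed_nonzero T \<Longrightarrow> t \<in> T \<Longrightarrow> t \<noteq> 0"
  unfolding mult_closed_nonzero_def by auto

lemma mult_closed_nonzero_one: "mult_closed_nonzero T \<Longrightarrow> 1 \<in> T"
  unfolding mult_closed_nonzero_def by auto

lemma mult_closed_nonzero_mult: "mult_closed_nonzero T \<Longrightarrow> s \<in> T \<Longrightarrow> t \<in> T \<Longrightarrow> s * t \<in> T"
  unfolding mult_closed_nonzero_def by auto

lemma mult_closed_nonzero_power: "mult_closed_nonzero T \<Longrightarrow> t \<in> T \<Longrightarrow> t ^ n \<in> T"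
  by (induction n) (auto intro: mult_closed_nonzero_one mult_closed_nonzero_mult)

lemma mult_closed_nonzero_compl_prime: "is_prime_ideal Q \<Longrightarrow> mult_closed_nonzero (- Q)"
  unfolding mult_closed_nonzero_def
  using prime_ideal_one_notin ideal_zero[OF prime_ideal_is_ideal] prime_ideal_mult by fastforce

lemma in_localization_set_iff: "u \<in> localization_set T \<longleftrightarrow> (\<exists>a. \<exists>s\<in>T. u = Fract a s)"
  unfolding localization_set_def by blast

lemma Fract_in_localization_set_iff:
  assumes T: "mult_closed_nonzero T" and s: "s \<noteq> 0"
  shows "Fract a s \<in> localization_set T \<longleftrightarrow> (\<exists>t\<in>T. s dvd t * a)"
proof
  assume "Fract a s \<in> localization_set T"
  then obtain c t where t: "t \<in> T" "Fract a s = Fract c t"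
    unfolding in_localization_set_iff by blast
  then have "t * a = s * c"
    using s mult_closed_nonzero_nonzero[OF T t(1)] by (simp add: eq_fract mult.commute)
  then show "\<exists>t\<in>T. s dvd t * a"
    using t(1) by (metis dvd_triv_left)
next
  assume "\<exists>t\<in>T. s dvd t * a"
  then obtain t c where t: "t \<in> T" "t * a = s * c"
    unfolding dvd_def by blast
  then have "Fract a s = Fract c t"
    using s mult_closed_nonzero_nonzero[OF T t(1)] by (simp add: eq_fract mult.commute)
  then show "Fract a s \<in> localization_set T"
    unfolding in_localization_set_iff using t(1) by blast
qed

lemma Fract_one_in_localization_set_iff:
  "mult_closed_nonzero T \<Longrightarrow> s \<noteq> 0 \<Longrightarrow> Fract 1 s \<in> localization_set T \<longleftrightarrow> (\<exists>t\<in>T. s dvd t)"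
  by (simp add: Fract_in_localization_set_iff)

lemma localization_set_mult:
  assumes T: "mult_closed_nonzero T" and "u \<in> localization_set T" "v \<in> localization_set T"
  shows "u * v \<in> localization_set T"
proof -
  obtain a s b t where "s \<in> T" "t \<in> T" "u = Fract a s" "v = Fract b t"
    using assms(2,3) unfolding in_localization_set_iff by blast
  then show ?thesis
    unfolding in_localization_set_iff using mult_closed_nonzero_mult[OF T] by auto
qed

lemma Fract_denom_one_in_localization_set: "mult_closed_nonzero T \<Longrightarrow> Fract a 1 \<in> localization_set T"
  unfolding in_localization_set_iff using mult_closed_nonzero_one by blast

lemma is_localization_compl_prime: "is_prime_ideal Q \<Longrightarrow> is_localization (localization_set (- Q))"
  unfolding is_localization_def using mult_closed_nonzero_compl_prime by blast

lemma in_sublocalizationI: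
  assumes "is_sublocalization B"
    and "\<And>T. mult_closed_nonzero T \<Longrightarrow> B \<subseteq> localization_set T \<Longrightarrow> u \<in> localization_set T"
  shows "u \<in> B"
proof -
  obtain F where F: "\<forall>L\<in>F. is_localization L" "B = \<Inter>F"
    using assms(1) unfolding is_sublocalization_def by blast
  have "u \<in> L" if L: "L \<in> F" for L
  proof -
    obtain T where T: "mult_closed_nonzero T" "L = localization_set T"
      using F(1) L unfolding is_localization_def by blast
    have "B \<subseteq> L"
      using L unfolding F(2) by blast
    then show ?thesis
      using assms(2)[OF T(1)] T(2) by simp
  qed
  then show ?thesis
    unfolding F(2) by blast
qed

lemma sublocalization_mult:
  assumes B: "is_sublocalization B" and "u \<in> B" "v \<in> B"
  shows "u * v \<in> B"
  using assms(2,3) localization_set_mult by (intro in_sublocalizationI[OF B]) blast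

lemma Fract_denom_one_in_sublocalization:
  assumes B: "is_sublocalization B"
  shows "Fract a 1 \<in> B"
  using Fract_denom_one_in_localization_set by (intro in_sublocalizationI[OF B])

text \<open>The localization is then at the set of those \<open>d\<close> with \<open>1/d \<in> B\<close>.\<close>
lemma is_localization_if_denominators_invertible:
  assumes B: "is_sublocalization B"
    and denom: "\<And>u. u \<in> B \<Longrightarrow> \<exists>c d. d \<noteq> 0 \<and> Fract 1 d \<in> B \<and> u = Fract c d"
  shows "is_localization B"
proof -
  define S where "S = {d. d \<noteq> 0 \<and> Fract 1 d \<in> B}"
  have "Fract 1 (s * t) \<in> B" if "s \<in> S" "t \<in> S" for s t
    using sublocalization_mult[OF B, of "Fract 1 s" "Fract 1 t"] that by (simp add: S_def)
  then have "mult_closed_nonzero S"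
    unfolding mult_closed_nonzero_def
    using Fract_denom_one_in_sublocalization[OF B, of 1] by (auto simp: S_def)
  moreover have "B = localization_set S"
  proof
    show "B \<subseteq> localization_set S"
    proof
      fix u assume "u \<in> B"
      then obtain c d where "d \<noteq> 0" "Fract 1 d \<in> B" "u = Fract c d"
        using denom by blast
      then show "u \<in> localization_set S"
        unfolding in_localization_set_iff S_def by blast
    qed
  next
    show "localization_set S \<subseteq> B"
    proof
      fix u assume "u \<in> localization_set S"
      then obtain a d where "d \<in> S" "u = Fract a d"
        unfolding in_localization_set_iff by blast
      moreover have "Fract a 1 * Fract 1 d \<in> B"
        using \<open>d \<in> S\<close> sublocalization_mult[OF B Fract_denom_one_in_sublocalization[OF B]]
        unfolding S_def by blast
      ultimately show "u \<in> B"
        by simp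
    qed
  qed
  ultimately show ?thesis
    unfolding is_localization_def by blast
qed

lemma radical_colon_eq_radical_principal:
  assumes N: "noetherian_ring TYPE('a::idom)"
    and H: "\<forall>(x::'a) P. associated_prime P (principal_ideal x) \<longrightarrow>
      (\<exists>y. P = radical (principal_ideal y))"
  shows "\<exists>y. radical (colon (principal_ideal s) a) = radical (principal_ideal (y::'a))"
proof -
  obtain \<Pi> where \<Pi>: "finite \<Pi>" "\<forall>Q\<in>\<Pi>. minimal_prime_over Q (colon (principal_ideal s) a)"
    "radical (colon (principal_ideal s) a) = \<Inter>\<Pi>"
    using radical_eq_Inter_finite_minimal_primes[OF N, of "colon (principal_ideal s) a"]
      is_ideal_colon[OF is_ideal_principal_ideal] by blast
  have "\<forall>Q\<in>\<Pi>. \<exists>y. Q = radical (principal_ideal y)"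
    using H \<Pi>(2) unfolding associated_prime_def by blast
  then obtain y where y: "\<forall>Q\<in>\<Pi>. Q = radical (principal_ideal (y Q))"
    by (rule bchoice[THEN exE])
  have "(\<Inter>Q\<in>\<Pi>. radical (principal_ideal (y Q))) = (\<Inter>Q\<in>\<Pi>. Q)"
    by (rule INF_cong[OF refl]) (rule y[rule_format, THEN sym])
  then have "radical (colon (principal_ideal s) a) = radical (principal_ideal (\<Prod>Q\<in>\<Pi>. y Q))"
    unfolding radical_principal_prod[OF \<Pi>(1)] \<Pi>(3) by simp
  then show ?thesis
    by blast
qed

lemma Fract_one_power_in_localization_set:
  assumes T: "mult_closed_nonzero T" and s: "s \<noteq> 0" and y: "y \<noteq> 0"
    and a: "Fract a s \<in> localization_set T"
    and colon_sub: "colon (principal_ideal s) a \<subseteq> radical (principal_ideal y)"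
  shows "Fract 1 (y ^ m) \<in> localization_set T"
proof -
  obtain t where t: "t \<in> T" "s dvd t * a"
    using a Fract_in_localization_set_iff[OF T s] by blast
  then have "t \<in> radical (principal_ideal y)"
    using colon_sub by (auto simp: in_colon_principal_iff)
  then obtain e where "y dvd t ^ e"
    unfolding in_radical_iff in_principal_ideal_iff by blast
  then have "y ^ m dvd (t ^ e) ^ m"
    by (rule dvd_power_same)
  moreover have "(t ^ e) ^ m \<in> T"
    using mult_closed_nonzero_power[OF T] t(1) by blast
  ultimately show ?thesis
    using Fract_one_in_localization_set_iff[OF T] y by auto
qed

lemma Fract_one_power_in_sublocalization:
  assumes B: "is_sublocalization B" and s: "s \<noteq> 0" and y: "y \<noteq> 0" and a: "Fract a s \<in> B"
    and colon_sub: "colon (principal_ideal s) a \<subseteq> radical (principal_ideal y)"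
  shows "Fract 1 (y ^ m) \<in> B"
  using a Fract_one_power_in_localization_set[OF _ s y _ colon_sub]
  by (intro in_sublocalizationI[OF B]) blast

theorem sublocalization_is_localization:
  assumes N: "noetherian_ring TYPE('a::idom)"
    and H: "\<forall>(x::'a) P. associated_prime P (principal_ideal x) \<longrightarrow>
      (\<exists>y. P = radical (principal_ideal y))"
    and B: "is_sublocalization (B :: 'a fract set)"
  shows "is_localization B"
proof (rule is_localization_if_denominators_invertible[OF B])
  fix u assume u: "u \<in> B"
  obtain a s where u_eq: "u = Fract a s" and s: "s \<noteq> 0"
    by (cases u) auto
  obtain y where y: "radical (colon (principal_ideal s) a) = radical (principal_ideal y)"
    using radical_colon_eq_radical_principal[OF N H, of s a] by blast
  have "s \<in> colon (principal_ideal s) a"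
    by (simp add: in_colon_principal_iff)
  then have "s \<in> radical (principal_ideal y)"
    using y subset_radical[of "colon (principal_ideal s) a"] by blast
  then have y0: "y \<noteq> 0"
    using s radical_principal_zero by auto
  have "y \<in> radical (colon (principal_ideal s) a)"
    unfolding y using subset_radical principal_ideal_self by blast
  then obtain m c where "y ^ m * a = s * c"
    unfolding in_radical_iff in_colon_principal_iff dvd_def by blast
  then have "u = Fract c (y ^ m)"
    using s y0 by (simp add: u_eq eq_fract mult.commute)
  moreover have "Fract 1 (y ^ m) \<in> B"
    using Fract_one_power_in_sublocalization[OF B s y0] u y subset_radical unfolding u_eq
    by blast
  ultimately show "\<exists>c d. d \<noteq> 0 \<and> Fract 1 d \<in> B \<and> u = Fract c d"
    using y0 by (intro exI[of _ c] exI[of _ "y ^ m"]) simp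
qed

text \<open>The ring of sections of the structure sheaf over the open set \<open>Spec A - V(P)\<close>.\<close>
definition sections_outside :: "'a::idom set \<Rightarrow> 'a fract set" where
  "sections_outside P = \<Inter>{localization_set (- Q) | Q. is_prime_ideal Q \<and> \<not> P \<subseteq> Q}"

lemma is_sublocalization_sections_outside: "is_sublocalization (sections_outside P)"
  unfolding is_sublocalization_def sections_outside_def
  by (rule exI, rule conjI[OF _ refl]) (auto intro: is_localization_compl_prime)

lemma Fract_in_sections_outside:
  assumes x: "x \<noteq> 0" and P: "P \<subseteq> radical (colon (principal_ideal x) a)"
  shows "Fract a x \<in> sections_outside P"
  unfolding sections_outside_def
proof (intro InterI, elim CollectE exE conjE)
  fix L Q assume L: "L = localization_set (- Q)" and Q: "is_prime_ideal Q" "\<not> P \<subseteq> Q"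
  have "\<not> colon (principal_ideal x) a \<subseteq> Q"
    using radical_subset_prime[OF Q(1)] P Q(2) by blast
  then have "\<exists>t\<in>- Q. x dvd t * a"
    by (auto simp: in_colon_principal_iff)
  then show "Fract a x \<in> L"
    unfolding L using Fract_in_localization_set_iff[OF mult_closed_nonzero_compl_prime[OF Q(1)] x]
    by blast
qed

lemma subset_radical_principal_if_inverse_in_sections_outside:
  assumes N: "noetherian_ring TYPE('a::idom)"
    and s: "(s::'a) \<noteq> 0" and inv: "Fract 1 s \<in> sections_outside P"
  shows "P \<subseteq> radical (principal_ideal s)"
proof -
  obtain \<Pi> where \<Pi>: "finite \<Pi>" "\<forall>Q\<in>\<Pi>. is_prime_ideal Q" "radical (principal_ideal s) = \<Inter>\<Pi>"
    using radical_eq_Inter_finite_primes[OF N, of "principal_ideal s"] is_ideal_principal_ideal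
    by blast
  have "P \<subseteq> Q" if Q: "Q \<in> \<Pi>" for Q
  proof (rule ccontr)
    assume "\<not> P \<subseteq> Q"
    then have "Fract 1 s \<in> localization_set (- Q)"
      using inv \<Pi>(2) Q unfolding sections_outside_def by blast
    then obtain t where "t \<notin> Q" "s dvd t"
      using Fract_one_in_localization_set_iff[OF mult_closed_nonzero_compl_prime s] \<Pi>(2) Q
      by blast
    moreover have "s \<in> Q"
      using \<Pi>(3) Q subset_radical principal_ideal_self by blast
    ultimately show False
      using ideal_mult_right[OF prime_ideal_is_ideal] \<Pi>(2) Q by (metis dvd_def)
  qed
  then show ?thesis
    using \<Pi>(3) by blast
qed

theorem associated_prime_eq_radical_principal:
  assumes N: "noetherian_ring TYPE('a::idom)"
    and G: "\<forall>B :: 'a fract set. is_sublocalization B \<longrightarrow> is_localization B"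
    and P: "associated_prime P (principal_ideal (x::'a))"
  shows "\<exists>y. P = radical (principal_ideal y)"
proof -
  obtain a where a: "P = radical (colon (principal_ideal x) a)"
    using associated_prime_eq_radical_colon[OF N is_ideal_principal_ideal P] by blast
  have Pp: "is_prime_ideal P"
    using associated_primeD[OF is_ideal_principal_ideal P] by blast
  show ?thesis
  proof (cases "x = 0")
    case True
    show ?thesis
      by (intro exI[of _ 0] radical_colon_zero_eq[OF Pp a[unfolded True]])
  next
    case False
    obtain S where S: "mult_closed_nonzero S" "sections_outside P = localization_set S"
      using G[rule_format, OF is_sublocalization_sections_outside] unfolding is_localization_def
      by blast
    have "Fract a x \<in> sections_outside P"
      by (rule Fract_in_sections_outside[OF False]) (simp add: a)
    then have "Fract a x \<in> localization_set S"
      using S(2) by simp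
    then obtain s where s: "s \<in> S" "x dvd s * a"
      using Fract_in_localization_set_iff[OF S(1) False] by blast
    have s0: "s \<noteq> 0"
      using mult_closed_nonzero_nonzero[OF S(1) s(1)] .
    have "s \<in> colon (principal_ideal x) a"
      using s(2) by (simp add: in_colon_principal_iff)
    then have "s \<in> P"
      unfolding a using subset_radical by blast
    then have "radical (principal_ideal s) \<subseteq> P"
      by (intro radical_subset_prime[OF Pp] principal_ideal_subset[OF prime_ideal_is_ideal[OF Pp]])
    moreover have "Fract 1 s \<in> sections_outside P"
      unfolding S(2) using Fract_one_in_localization_set_iff[OF S(1) s0] s(1) dvd_refl by blast
    then have "P \<subseteq> radical (principal_ideal s)"
      by (rule subset_radical_principal_if_inverse_in_sections_outside[OF N s0])
    ultimately show ?thesis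
      by (intro exI[of _ s] subset_antisym)
  qed
qed

theorem corollary2p8:
  assumes "noetherian_ring TYPE('a::idom)"
  shows "((\<forall>B :: 'a fract set. is_sublocalization B \<longrightarrow> is_localization B) \<longleftrightarrow>
          (\<forall>(x::'a) P. associated_prime P (principal_ideal x) \<longrightarrow>
              (\<exists>y. P = radical (principal_ideal y))))
       \<and> ((\<forall>B :: 'a fract set. is_sublocalization B \<longrightarrow> is_localization B) \<longrightarrow>
          (\<forall>(x::'a) P. x \<noteq> 0 \<longrightarrow> \<not> embedded_associated_prime P (principal_ideal x)))"
proof -
  have iff: "(\<forall>B :: 'a fract set. is_sublocalization B \<longrightarrow> is_localization B) \<longleftrightarrow>
      (\<forall>(x::'a) P. associated_prime P (principal_ideal x) \<longrightarrow> (\<exists>y. P = radical (principal_ideal y)))"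
    using associated_prime_eq_radical_principal[OF assms] sublocalization_is_localization[OF assms]
    by blast
  then show ?thesis
    using no_embedded_associated_prime[OF assms] by blast
qed

end
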